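(* Let $G$ be a locally compact Hausdorff group acting continuously on a locally compact Hausdorff space $X$, and let $\alpha$ be the induced action on $C_0(X)$, $(\alpha_gf)(x)=f(xg)$. The $G$-action on $X$ is free if and only if $$\mathrm{span}\{f_1\alpha_{(\cdot)}(f_2): f_1,f_2\in C_c(X)\}$$ is dense in $C(G,C(X))$ for the $\kappa$-topology, where $(f_1\alpha_{(\cdot)}(f_2))(g)=f_1\alpha_g(f_2)$.
   Context: $C_c(X)$ is the algebra of compactly supported continuous functions, $C(X)$ all continuous complex functions with the compact-open topology (seminorms $p_L(h)=\sup_{x\in L}|h(x)|$, $L$ compact). $C(G,C(X))$ is the $*$-algebra of continuous maps $G\to C(X)$ with the $\kappa$-topology given by the seminorms $u\mapsto\sup_{g\in K}p_L(u(g))$, $K\subseteq G$, $L\subseteq X$ compact. The action is free if $xg=x$ implies $g=e$. *)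

theory Defs
  imports "HOL-Analysis.Analysis"
begin

text \<open>The group G is written additively (type class topological_group_add,
which does NOT require commutativity): e = 0, gh = g + h.\<close>

definition right_action :: "('x::topological_space \<Rightarrow> 'g::topological_group_add \<Rightarrow> 'x) \<Rightarrow> bool" where
  "right_action act \<longleftrightarrow>
     (\<forall>x. act x 0 = x) \<and> (\<forall>x g h. act (act x g) h = act x (g + h)) \<and>
     continuous_on UNIV (\<lambda>(x, g). act x g)"

definition free_action :: "('x \<Rightarrow> 'g::group_add \<Rightarrow> 'x) \<Rightarrow> bool" where
  "free_action act \<longleftrightarrow> (\<forall>x g. act x g = x \<longrightarrow> g = 0)"

definition Cc :: "('x::topological_space \<Rightarrow> complex) \<Rightarrow> bool" where
  "Cc f \<longleftrightarrow> continuous_on UNIV f \<and> compact (closure {x. f x \<noteq> 0})"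

definition seminorm_le :: "'x set \<Rightarrow> ('x \<Rightarrow> complex) \<Rightarrow> real \<Rightarrow> bool" where
  "seminorm_le L h e \<longleftrightarrow> (\<forall>x\<in>L. cmod (h x) \<le> e)"

text \<open>C(G, C(X)): maps G -> C(X) continuous for the compact-open topology on C(X)
  (topology of the seminorms p_L, L compact).\<close>
definition CGCX :: "('g::topological_space \<Rightarrow> 'x::topological_space \<Rightarrow> complex) set" where
  "CGCX = {u. (\<forall>g. continuous_on UNIV (u g)) \<and>
     (\<forall>g0 L e. compact L \<and> e > 0 \<longrightarrow>
        (\<exists>U. open U \<and> g0 \<in> U \<and> (\<forall>g\<in>U. seminorm_le L (\<lambda>x. u g x - u g0 x) e)))}"

definition alpha_prod :: "('x \<Rightarrow> 'g \<Rightarrow> 'x) \<Rightarrow> ('x \<Rightarrow> complex) \<Rightarrow> ('x \<Rightarrow> complex) \<Rightarrow> 'g \<Rightarrow> 'x \<Rightarrow> complex" where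
  "alpha_prod act f1 f2 = (\<lambda>g x. f1 x * f2 (act x g))"

definition span_Cc :: "('x::topological_space \<Rightarrow> 'g \<Rightarrow> 'x) \<Rightarrow> ('g \<Rightarrow> 'x \<Rightarrow> complex) set" where
  "span_Cc act = {v. \<exists>(n::nat) (c::nat \<Rightarrow> complex) f1 f2.
      (\<forall>i<n. Cc (f1 i) \<and> Cc (f2 i)) \<and>
      v = (\<lambda>g x. \<Sum>i<n. c i * alpha_prod act (f1 i) (f2 i) g x)}"

text \<open>Density of S in C(G,C(X)) for the kappa-topology, given by the seminorms
  u |-> sup_{g in K} p_L(u(g)), K, L compact (a directed family, so basic
  neighbourhoods are single seminorm balls).\<close>
definition kappa_dense :: "('g::topological_space \<Rightarrow> 'x::topological_space \<Rightarrow> complex) set \<Rightarrow> bool" where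
  "kappa_dense S \<longleftrightarrow> (\<forall>u\<in>CGCX. \<forall>K L e. compact K \<and> compact L \<and> e > 0 \<longrightarrow>
      (\<exists>v\<in>S. \<forall>g\<in>K. seminorm_le L (\<lambda>x. u g x - v g x) e))"

end

theory Submission
  imports Defs
begin

text \<open>If the action is free, the functions \<open>(x, g) \<mapsto> a(x) b(xg)\<close> with real \<open>a, b \<in> C\<^sub>c(X)\<close>
  separate the points of \<open>X \<times> G\<close>; their real span is closed under products, and on a compact
  rectangle \<open>L \<times> K\<close> it contains the constants. By Stone--Weierstrass it is uniformly dense in
  \<open>C(L \<times> K)\<close>, and since every \<open>u \<in> C(G, C(X))\<close> is jointly continuous on \<open>L \<times> G\<close>, approximating
  the real and imaginary parts of \<open>(x, g) \<mapsto> u(g)(x)\<close> gives \<open>\<kappa>\<close>-density.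
  Conversely, if \<open>xg = x\<close> with \<open>g \<noteq> e\<close>, every \<open>v\<close> in the span has \<open>v(g)(x) = v(e)(x)\<close>, so no
  such \<open>v\<close> approximates \<open>h \<mapsto> \<phi>(h)\<close> (constant in \<open>x\<close>) at \<open>x\<close> for an Urysohn function
  \<open>\<phi>\<close> with \<open>\<phi>(e) = 0\<close> and \<open>\<phi>(g) = 1\<close>.\<close>

lemma Hausdorff_space_euclidean_t2: "Hausdorff_space (euclidean :: 'a::t2_space topology)"
  unfolding Hausdorff_space_def by (simp add: disjnt_def) (metis hausdorff)

lemma completely_regular_space_euclidean_if_locally_compact:
  assumes "locally_compact_space (euclidean :: 'a::t2_space topology)"
  shows "completely_regular_space (euclidean :: 'a topology)"
  using locally_compact_regular_imp_completely_regular_space[OF assms]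
    Hausdorff_space_euclidean_t2 by blast

lemma compact_if_closed_subset: "compact S \<Longrightarrow> closed T \<Longrightarrow> T \<subseteq> S \<Longrightarrow> compact T"
  using compact_Int_closed[of S T] by (simp add: Int_absorb1)

definition real_Cc :: "('a::topological_space \<Rightarrow> real) \<Rightarrow> bool" where
  "real_Cc f \<longleftrightarrow> continuous_on UNIV f \<and> compact (closure {x. f x \<noteq> 0})"

lemma real_Cc_mult:
  assumes "real_Cc a" "real_Cc b"
  shows "real_Cc (\<lambda>x. a x * b x)"
proof -
  have "closure {x. a x * b x \<noteq> 0} \<subseteq> closure {x. a x \<noteq> 0}"
    by (rule closure_mono) auto
  then have "compact (closure {x. a x * b x \<noteq> 0})"
    using assms(1) compact_if_closed_subset[OF _ closed_closure] unfolding real_Cc_def by blast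
  with assms show ?thesis
    unfolding real_Cc_def by (blast intro: continuous_on_mult)
qed

lemma Cc_of_real: "real_Cc a \<Longrightarrow> Cc (\<lambda>x. complex_of_real (a x))"
  unfolding real_Cc_def Cc_def by (auto intro: continuous_intros)

lemma real_Cc_Urysohn:
  fixes C T :: "'a::t2_space set"
  assumes lc: "locally_compact_space (euclidean :: 'a topology)"
    and C: "compact C" and T: "closed T" "C \<inter> T = {}"
  obtains f :: "'a \<Rightarrow> real" where "real_Cc f" "\<forall>x\<in>C. f x = 1" "\<forall>x\<in>T. f x = 0"
proof -
  have "\<forall>K :: 'a set. compactin euclidean K \<longrightarrow> (\<exists>U L. openin euclidean U \<and> compactin euclidean L \<and>
      closedin euclidean L \<and> K \<subseteq> U \<and> U \<subseteq> L)"
    using iffD1[OF locally_compact_space_compact_closed_compact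
        [OF disjI1[OF Hausdorff_space_euclidean_t2]] lc] by blast
  then obtain U L where UL: "open U" "compact L" "closed L" "C \<subseteq> U" "U \<subseteq> L"
    using C by (metis closed_closedin compactin_euclidean_iff open_openin)
  have cT: "closedin euclidean (- (U - T))"
    using UL(1) T(1) by (metis closed_closedin closed_Compl open_Diff)
  have disj: "disjnt C (- (U - T))"
    using UL(4) T(2) by (auto simp: disjnt_def)
  obtain f :: "'a \<Rightarrow> real" where
    f: "continuous_map euclidean euclideanreal f" "f ` (- (U - T)) \<subseteq> {0}" "f ` C \<subseteq> {1}"
    using Urysohn_completely_regular_compact_closed_alt
      [OF completely_regular_space_euclidean_if_locally_compact[OF lc] _ cT disj] C
    by (metis compactin_euclidean_iff)
  have "closure {x. f x \<noteq> 0} \<subseteq> L"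
    using f(2) UL by (intro closure_minimal) auto
  then have "real_Cc f"
    using f(1) UL compact_if_closed_subset[OF _ closed_closure] unfolding real_Cc_def by simp
  with f show thesis
    by (intro that) auto
qed

lemma right_action_continuous:
  "right_action act \<Longrightarrow> continuous_on UNIV (\<lambda>p. act (fst p) (snd p))"
  unfolding right_action_def by (simp add: case_prod_beta')

lemma free_action_inj:
  assumes "right_action act" "free_action act" "act x g = act x h"
  shows "g = h"
proof -
  have act: "\<And>x. act x 0 = x" "\<And>x g h. act (act x g) h = act x (g + h)"
    using assms(1) by (auto simp: right_action_def)
  have "act x (h + - g) = act (act x g) (- g)"
    by (simp add: act assms(3))
  also have "\<dots> = x"
    by (simp add: act)
  finally have "h + - g = 0"
    using assms(2) unfolding free_action_def by blast
  then show ?thesis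
    by simp
qed

subsection \<open>The algebra generated by the functions \<open>(x, g) \<mapsto> a(x) b(xg)\<close>\<close>

inductive_set alpha_products :: "('x::topological_space \<Rightarrow> 'g \<Rightarrow> 'x) \<Rightarrow> ('x \<times> 'g \<Rightarrow> real) set"
  for act
where
  basic: "real_Cc a \<Longrightarrow> real_Cc b \<Longrightarrow> (\<lambda>(x, g). a x * b (act x g)) \<in> alpha_products act"
| add: "F \<in> alpha_products act \<Longrightarrow> G \<in> alpha_products act \<Longrightarrow> (\<lambda>p. F p + G p) \<in> alpha_products act"
| scale: "F \<in> alpha_products act \<Longrightarrow> (\<lambda>p. c * F p) \<in> alpha_products act"

lemma alpha_products_mult:
  assumes "F \<in> alpha_products act" "G \<in> alpha_products act"
  shows "(\<lambda>p. F p * G p) \<in> alpha_products act"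
  using assms
proof (induction F rule: alpha_products.induct)
  case (basic a b)
  note ab = basic.hyps
  from basic.prems show ?case
  proof (induction G rule: alpha_products.induct)
    case (basic a' b')
    then have "(\<lambda>(x, g). (\<lambda>x. a x * a' x) x * (\<lambda>y. b y * b' y) (act x g)) \<in> alpha_products act"
      using ab by (intro alpha_products.basic real_Cc_mult)
    then show ?case
      by (simp add: case_prod_beta' mult_ac)
  next
    case (add G1 G2)
    then show ?case
      using alpha_products.add[OF add.IH] by (simp add: distrib_left)
  next
    case (scale G c)
    then show ?case
      using alpha_products.scale[OF scale.IH, of c] by (simp add: mult_ac)
  qed
next
  case (add F1 F2)
  then show ?case
    using alpha_products.add[OF add.IH] by (simp add: distrib_right)
next
  case (scale F c)
  then show ?case
    using alpha_products.scale[OF scale.IH, of c] by (simp add: mult_ac)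
qed

lemma alpha_products_continuous:
  assumes "right_action act" "F \<in> alpha_products act"
  shows "continuous_on UNIV F"
  using assms(2)
proof (induction F rule: alpha_products.induct)
  case (basic a b)
  then have a: "continuous_on UNIV a" and b: "continuous_on UNIV b"
    by (simp_all add: real_Cc_def)
  have "continuous_on UNIV (\<lambda>p. a (fst p))"
    by (rule continuous_on_compose2[OF a]) (auto intro: continuous_on_fst)
  moreover have "continuous_on UNIV (\<lambda>p. b (act (fst p) (snd p)))"
    by (rule continuous_on_compose2[OF b right_action_continuous[OF assms(1)]]) auto
  ultimately show ?case
    unfolding case_prod_beta' by (rule continuous_on_mult)
next
  case (add F G)
  then show ?case
    by (intro continuous_on_add)
next
  case (scale F c)
  then show ?case
    by (intro continuous_on_mult continuous_on_const)
qed

lemma alpha_products_separate_points: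
  fixes act :: "'x::t2_space \<Rightarrow> 'g::topological_group_add \<Rightarrow> 'x"
  assumes lc: "locally_compact_space (euclidean :: 'x topology)"
    and "right_action act" "free_action act" "p \<noteq> q"
  shows "\<exists>F\<in>alpha_products act. F p \<noteq> F q"
proof -
  obtain x g x' g' where pq: "p = (x, g)" "q = (x', g')"
    by fastforce
  have "\<exists>a b. real_Cc a \<and> real_Cc b \<and> a x * b (act x g) = 1 \<and> a x' * b (act x' g') = 0"
  proof (cases "x = x'")
    case False
    obtain a where "real_Cc a" "a x = 1" "a x' = 0"
      using real_Cc_Urysohn[OF lc, of "{x}" "{x'}"] False by auto
    moreover obtain b where "real_Cc b" "b (act x g) = 1"
      using real_Cc_Urysohn[OF lc, of "{act x g}" "{}"] by auto
    ultimately show ?thesis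
      by force
  next
    case True
    then have "act x g \<noteq> act x g'"
      using free_action_inj[OF assms(2,3)] assms(4) pq by blast
    then obtain b where "real_Cc b" "b (act x g) = 1" "b (act x g') = 0"
      using real_Cc_Urysohn[OF lc, of "{act x g}" "{act x g'}"] by auto
    moreover obtain a where "real_Cc a" "a x = 1"
      using real_Cc_Urysohn[OF lc, of "{x}" "{}"] by auto
    ultimately show ?thesis
      using True by force
  qed
  then obtain a b where ab: "real_Cc a" "real_Cc b" "a x * b (act x g) \<noteq> a x' * b (act x' g')"
    by auto
  then have "(\<lambda>(x, g). a x * b (act x g)) \<in> alpha_products act"
    by (intro alpha_products.basic)
  moreover have "(\<lambda>(x, g). a x * b (act x g)) p \<noteq> (\<lambda>(x, g). a x * b (act x g)) q"
    using ab(3) pq by simp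
  ultimately show ?thesis
    by blast
qed

text \<open>The constants are not in \<open>alpha_products act\<close>, so Stone--Weierstrass is applied to the
  functions that agree on the rectangle with a member of it.\<close>

lemma alpha_products_approx:
  fixes act :: "'x::t2_space \<Rightarrow> 'g::{topological_group_add, t2_space} \<Rightarrow> 'x"
  assumes lc: "locally_compact_space (euclidean :: 'x topology)"
    and ra: "right_action act" and free: "free_action act"
    and "compact L" "compact K" "continuous_on (L \<times> K) f" "e > 0"
  shows "\<exists>F\<in>alpha_products act. \<forall>p\<in>L \<times> K. \<bar>f p - F p\<bar> < e"
proof -
  define S where "S = L \<times> K"
  define R where "R = {F. \<exists>F'\<in>alpha_products act. \<forall>p\<in>S. F p = F' p}"
  have "compact S"
    using assms(4,5) by (simp add: S_def compact_Times)
  have "continuous_on S (\<lambda>p. act (fst p) (snd p))"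
    using right_action_continuous[OF ra] by (rule continuous_on_subset) simp
  then have "compact ((\<lambda>p. act (fst p) (snd p)) ` S)"
    using \<open>compact S\<close> by (rule compact_continuous_image)
  then obtain b1 where b1: "real_Cc b1" "\<forall>y\<in>(\<lambda>p. act (fst p) (snd p)) ` S. b1 y = 1"
    by (rule real_Cc_Urysohn[OF lc _ closed_empty Int_empty_right])
  obtain a1 where a1: "real_Cc a1" "\<forall>x\<in>L. a1 x = 1"
    by (rule real_Cc_Urysohn[OF lc \<open>compact L\<close> closed_empty Int_empty_right])
  interpret function_ring_on R S
  proof
    show "compact S" by fact
  next
    fix F assume "F \<in> R"
    then obtain F' where "F' \<in> alpha_products act" "\<forall>p\<in>S. F p = F' p"
      unfolding R_def by blast
    then show "continuous_on S F"
      using continuous_on_subset[OF alpha_products_continuous[OF ra] subset_UNIV]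
      by (metis continuous_on_eq)
  next
    fix F G assume "F \<in> R" "G \<in> R"
    then obtain F' G' where F': "F' \<in> alpha_products act" "\<forall>p\<in>S. F p = F' p"
      and G': "G' \<in> alpha_products act" "\<forall>p\<in>S. G p = G' p"
      unfolding R_def by blast
    then have "(\<lambda>p. F' p + G' p) \<in> alpha_products act" "(\<lambda>p. F' p * G' p) \<in> alpha_products act"
      by (simp_all add: alpha_products.add alpha_products_mult)
    with F'(2) G'(2) show "(\<lambda>p. F p + G p) \<in> R" "(\<lambda>p. F p * G p) \<in> R"
      unfolding R_def by force+
  next
    fix c :: real
    define C where "C p = c * (case p of (x, g) \<Rightarrow> a1 x * b1 (act x g))" for p
    have "C \<in> alpha_products act"
      unfolding C_def by (intro alpha_products.scale alpha_products.basic a1(1) b1(1))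
    moreover have "\<forall>p\<in>S. c = C p"
      using a1(2) b1(2) by (auto simp: S_def C_def)
    ultimately show "(\<lambda>_. c) \<in> R"
      unfolding R_def by blast
  next
    fix p q :: "'x \<times> 'g" assume "p \<noteq> q"
    then obtain F where "F \<in> alpha_products act" "F p \<noteq> F q"
      using alpha_products_separate_points[OF lc ra free] by blast
    then show "\<exists>F\<in>R. F p \<noteq> F q"
      unfolding R_def by blast
  qed
  obtain F where "F \<in> R" "\<forall>p\<in>S. \<bar>f p - F p\<bar> < e"
    using Stone_Weierstrass_basic assms(6,7) unfolding S_def by blast
  then show ?thesis
    unfolding R_def S_def by fastforce
qed

subsection \<open>The span of the functions \<open>f\<^sub>1 \<alpha>\<^sub>(\<^sub>\<cdot>\<^sub>)(f\<^sub>2)\<close>\<close>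

lemma sum_lessThan_add_nat:
  "(\<Sum>i<n + m. f i) = (\<Sum>i<n. f i) + (\<Sum>i<m. f (n + i) :: 'a::comm_monoid_add)"
  for n m :: nat
  by (induction m) (simp_all add: add_ac)

lemma span_Cc_add:
  assumes "v \<in> span_Cc act" "w \<in> span_Cc act"
  shows "(\<lambda>g x. v g x + w g x) \<in> span_Cc act"
proof -
  obtain n :: nat and c f1 f2 where v: "\<forall>i<n. Cc (f1 i) \<and> Cc (f2 i)"
    "v = (\<lambda>g x. \<Sum>i<n. c i * alpha_prod act (f1 i) (f2 i) g x)"
    using assms(1) unfolding span_Cc_def by blast
  obtain m :: nat and d h1 h2 where w: "\<forall>i<m. Cc (h1 i) \<and> Cc (h2 i)"
    "w = (\<lambda>g x. \<Sum>i<m. d i * alpha_prod act (h1 i) (h2 i) g x)"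
    using assms(2) unfolding span_Cc_def by blast
  define C where "C i = (if i < n then c i else d (i - n))" for i
  define F1 where "F1 i = (if i < n then f1 i else h1 (i - n))" for i
  define F2 where "F2 i = (if i < n then f2 i else h2 (i - n))" for i
  show ?thesis
    unfolding span_Cc_def
  proof (intro CollectI exI conjI allI impI)
    fix i assume "i < n + m"
    then show "Cc (F1 i)" "Cc (F2 i)"
      using v(1) w(1) by (auto simp: F1_def F2_def)
  next
    show "(\<lambda>g x. v g x + w g x) = (\<lambda>g x. \<Sum>i<n + m. C i * alpha_prod act (F1 i) (F2 i) g x)"
      by (simp add: v(2) w(2) sum_lessThan_add_nat C_def F1_def F2_def)
  qed
qed

lemma span_Cc_scale:
  assumes "v \<in> span_Cc act"
  shows "(\<lambda>g x. z * v g x) \<in> span_Cc act"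
proof -
  obtain n :: nat and c f1 f2 where "\<forall>i<n. Cc (f1 i) \<and> Cc (f2 i)"
    "v = (\<lambda>g x. \<Sum>i<n. c i * alpha_prod act (f1 i) (f2 i) g x)"
    using assms unfolding span_Cc_def by blast
  then show ?thesis
    unfolding span_Cc_def
    by (intro CollectI exI[of _ n] exI[of _ "\<lambda>i. z * c i"] exI[of _ f1] exI[of _ f2])
      (simp add: sum_distrib_left mult.assoc)
qed

lemma alpha_products_in_span_Cc:
  "F \<in> alpha_products act \<Longrightarrow> (\<lambda>g x. complex_of_real (F (x, g))) \<in> span_Cc act"
proof (induction F rule: alpha_products.induct)
  case (basic a b)
  then show ?case
    unfolding span_Cc_def
    by (intro CollectI exI[of _ 1] exI[of _ "\<lambda>_. 1"] exI[of _ "\<lambda>_ x. complex_of_real (a x)"]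
        exI[of _ "\<lambda>_ x. complex_of_real (b x)"] conjI allI impI Cc_of_real)
      (simp_all add: alpha_prod_def)
next
  case (add F G)
  then show ?case
    using span_Cc_add by fastforce
next
  case (scale F c)
  then show ?case
    using span_Cc_scale[of _ act "complex_of_real c"] by fastforce
qed

lemma span_Cc_fixed_point:
  assumes "act x 0 = x" "act x g = x" "v \<in> span_Cc act"
  shows "v g x = v 0 x"
  using assms by (auto simp: span_Cc_def alpha_prod_def)

subsection \<open>Continuous maps into \<open>C(X)\<close>\<close>

lemma CGCX_continuous_on:
  fixes u :: "'g::topological_space \<Rightarrow> 'x::topological_space \<Rightarrow> complex"
  assumes u: "u \<in> CGCX" and L: "compact L"
  shows "continuous_on (L \<times> UNIV) (\<lambda>(x, g). u g x)"
  unfolding continuous_on_topological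
proof (intro ballI allI impI)
  fix p B assume p: "p \<in> L \<times> UNIV" and B: "open B" "(case p of (x, g) \<Rightarrow> u g x) \<in> B"
  obtain x0 g0 where p0: "p = (x0, g0)"
    by fastforce
  obtain r where r: "r > 0" "ball (u g0 x0) r \<subseteq> B"
    using openE[OF B(1)] B(2) p0 by auto
  have "\<exists>V. open V \<and> g0 \<in> V \<and> (\<forall>g\<in>V. seminorm_le L (\<lambda>x. u g x - u g0 x) (r/2))"
    using u L r(1) unfolding CGCX_def by simp
  then obtain V where V: "open V" "g0 \<in> V" "\<And>g x. g \<in> V \<Longrightarrow> x \<in> L \<Longrightarrow> cmod (u g x - u g0 x) \<le> r/2"
    unfolding seminorm_le_def by blast
  have "continuous_on UNIV (u g0)"
    using u unfolding CGCX_def by simp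
  then obtain W where W: "open W" "x0 \<in> W" "\<And>x. x \<in> W \<Longrightarrow> u g0 x \<in> ball (u g0 x0) (r/2)"
    unfolding continuous_on_topological using r(1)
    by (metis UNIV_I centre_in_ball half_gt_zero open_ball)
  show "\<exists>A. open A \<and> p \<in> A \<and> (\<forall>y\<in>L \<times> UNIV. y \<in> A \<longrightarrow> (case y of (x, g) \<Rightarrow> u g x) \<in> B)"
  proof (intro exI conjI ballI impI)
    show "open (W \<times> V)" "p \<in> W \<times> V"
      using W V p0 by (simp_all add: open_Times)
  next
    fix y assume y: "y \<in> L \<times> UNIV" "y \<in> W \<times> V"
    then obtain x g where y0: "y = (x, g)" "x \<in> L" "x \<in> W" "g \<in> V"
      by blast
    have "dist (u g0 x0) (u g x) \<le> dist (u g0 x0) (u g0 x) + dist (u g0 x) (u g x)"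
      by (rule dist_triangle)
    also have "\<dots> < r"
      using V(3)[of g x] W(3)[of x] y0 by (simp add: dist_norm norm_minus_commute)
    finally show "(case y of (x, g) \<Rightarrow> u g x) \<in> B"
      using r(2) y0(1) by auto
  qed
qed

lemma CGCX_of_group_function:
  fixes \<phi> :: "'g::topological_space \<Rightarrow> real"
  assumes "continuous_on UNIV \<phi>"
  shows "(\<lambda>h (y::'x::topological_space). complex_of_real (\<phi> h)) \<in> CGCX"
  unfolding CGCX_def seminorm_le_def
proof (intro CollectI conjI allI impI)
  fix g0 :: 'g and L :: "'x set" and e :: real
  assume "compact L \<and> e > 0"
  moreover have "open {h. dist (\<phi> h) (\<phi> g0) < e}"
    using assms by (intro open_Collect_less continuous_on_dist continuous_on_const)
  moreover have "cmod (complex_of_real (\<phi> h) - complex_of_real (\<phi> g0)) = dist (\<phi> h) (\<phi> g0)" for h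
    by (metis dist_real_def norm_of_real of_real_diff)
  ultimately show "\<exists>U. open U \<and> g0 \<in> U \<and>
      (\<forall>g\<in>U. \<forall>x\<in>L. cmod (complex_of_real (\<phi> g) - complex_of_real (\<phi> g0)) \<le> e)"
    by (intro exI[of _ "{h. dist (\<phi> h) (\<phi> g0) < e}"]) auto
qed simp

lemma kappa_dense_span_Cc_if_free:
  fixes act :: "'x::t2_space \<Rightarrow> 'g::{topological_group_add, t2_space} \<Rightarrow> 'x"
  assumes lc: "locally_compact_space (euclidean :: 'x topology)"
    and ra: "right_action act" and free: "free_action act"
  shows "kappa_dense (span_Cc act)"
  unfolding kappa_dense_def
proof (intro ballI allI impI)
  fix u :: "'g \<Rightarrow> 'x \<Rightarrow> complex" and K :: "'g set" and L :: "'x set" and e :: real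
  assume u: "u \<in> CGCX" and KLe: "compact K \<and> compact L \<and> e > 0"
  then have K: "compact K" and L: "compact L" and e: "e / 2 > 0"
    by auto
  define U where "U = (\<lambda>(x, g). u g x)"
  have "continuous_on (L \<times> K) U"
    unfolding U_def by (rule continuous_on_subset[OF CGCX_continuous_on[OF u L]]) auto
  then have cont: "continuous_on (L \<times> K) (\<lambda>p. Re (U p))" "continuous_on (L \<times> K) (\<lambda>p. Im (U p))"
    by (simp_all add: continuous_on_Re continuous_on_Im)
  obtain F1 where F1: "F1 \<in> alpha_products act" "\<forall>p\<in>L \<times> K. \<bar>Re (U p) - F1 p\<bar> < e / 2"
    using alpha_products_approx[OF lc ra free L K cont(1) e] by blast
  obtain F2 where F2: "F2 \<in> alpha_products act" "\<forall>p\<in>L \<times> K. \<bar>Im (U p) - F2 p\<bar> < e / 2"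
    using alpha_products_approx[OF lc ra free L K cont(2) e] by blast
  define v where "v g x = complex_of_real (F1 (x, g)) + \<i> * complex_of_real (F2 (x, g))" for g x
  have "v \<in> span_Cc act"
    unfolding v_def by (intro span_Cc_add span_Cc_scale alpha_products_in_span_Cc F1(1) F2(1))
  moreover have "cmod (u g x - v g x) \<le> e" if "g \<in> K" "x \<in> L" for g x
  proof -
    have "cmod (u g x - v g x) \<le> \<bar>Re (u g x) - F1 (x, g)\<bar> + \<bar>Im (u g x) - F2 (x, g)\<bar>"
      using cmod_le[of "u g x - v g x"] by (simp add: v_def)
    also have "\<dots> < e / 2 + e / 2"
      using F1(2) F2(2) that by (intro add_strict_mono) (auto simp: U_def)
    finally show ?thesis
      by simp
  qed
  ultimately show "\<exists>v\<in>span_Cc act. \<forall>g\<in>K. seminorm_le L (\<lambda>x. u g x - v g x) e"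
    unfolding seminorm_le_def by blast
qed

lemma free_if_kappa_dense_span_Cc:
  fixes act :: "'x::topological_space \<Rightarrow> 'g::{topological_group_add, t2_space} \<Rightarrow> 'x"
  assumes lc: "locally_compact_space (euclidean :: 'g topology)"
    and ra: "right_action act" and dense: "kappa_dense (span_Cc act)"
  shows "free_action act"
  unfolding free_action_def
proof (intro allI impI, rule ccontr)
  fix x g assume fixed: "act x g = x" and "g \<noteq> 0"
  then have "disjnt {g} {0}"
    by simp
  moreover have "closedin euclidean {0 :: 'g}"
    by (metis closed_closedin closed_singleton)
  moreover have "compactin euclidean {g}"
    by simp
  ultimately obtain \<phi> :: "'g \<Rightarrow> real" where
    \<phi>: "continuous_map euclidean euclideanreal \<phi>" "\<phi> ` {0} \<subseteq> {0}" "\<phi> ` {g} \<subseteq> {1}"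
    by (metis Urysohn_completely_regular_compact_closed_alt
        completely_regular_space_euclidean_if_locally_compact[OF lc])
  have "(\<lambda>h (y::'x). complex_of_real (\<phi> h)) \<in> CGCX"
    using \<phi>(1) by (intro CGCX_of_group_function) simp
  then have "\<exists>v\<in>span_Cc act. \<forall>h\<in>{0, g}. seminorm_le {x} (\<lambda>y. complex_of_real (\<phi> h) - v h y) (1/3)"
    by (rule dense[unfolded kappa_dense_def, rule_format]) simp
  then obtain v where v: "v \<in> span_Cc act"
    and close: "\<forall>h\<in>{0, g}. seminorm_le {x} (\<lambda>y. complex_of_real (\<phi> h) - v h y) (1/3)"
    by blast
  have "v g x = v 0 x"
    using span_Cc_fixed_point[OF _ fixed v] ra by (simp add: right_action_def)
  moreover have "cmod (v 0 x) \<le> 1/3" "cmod (1 - v g x) \<le> 1/3"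
    using close \<phi>(2,3) by (auto simp: seminorm_le_def)
  ultimately show False
    using norm_triangle_ineq[of "1 - v g x" "v g x"] by simp
qed

theorem mainTheorem17:
  fixes act :: "'x::t2_space \<Rightarrow> 'g::{topological_group_add, t2_space} \<Rightarrow> 'x"
  assumes "locally_compact_space (euclidean :: 'g topology)"
    and "locally_compact_space (euclidean :: 'x topology)"
    and "right_action act"
  shows "free_action act \<longleftrightarrow> kappa_dense (span_Cc act)"
  using kappa_dense_span_Cc_if_free[OF assms(2,3)] free_if_kappa_dense_span_Cc[OF assms(1,3)]
  by blast

end
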